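(* Let $\phi(w)=aw+b$ with $a\in(0,1)$ and $b\in\mathbb{C}$, $\mathrm{Re}(b)\geq 0$ (so $\phi$ is a self-map of $\mathbb{C}_{+}$). Then the composition operator $C_{\phi}f=f\circ\phi$ is positively expansive on $H^2(\mathbb{C}_{+})$, i.e. for every $f\in H^2(\mathbb{C}_{+})$ with $\|f\|_2=1$ there exists $n\in\mathbb{N}$ such that $\|C_{\phi}^{n}f\|_2\geq 2$.
   Context: $\mathbb{C}_{+}=\{w\in\mathbb{C}:\mathrm{Re}(w)>0\}$ is the open right half-plane. $H^2(\mathbb{C}_{+})$ is the Hardy space of holomorphic functions $f$ on $\mathbb{C}_{+}$ with finite norm $\|f\|_2^2=\sup_{0<x<\infty}\frac{1}{\pi}\int_{-\infty}^{\infty}|f(x+iy)|^2\,dy$; it is a Hilbert space. For affine $\phi(w)=aw+b$ with $a>0$, $\mathrm{Re}(b)\ge 0$, the composition operator $C_\phi f=f\circ\phi$ is a bounded operator on $H^2(\mathbb{C}_{+})$. Such $\phi$ with $a\in(0,1)$ is called hyperbolic of type I. *)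

theory Defs
  imports "HOL-Analysis.Analysis"
begin

definition rhp :: "complex set" where
  "rhp = {w. Re w > 0}"

definition H2_norm_sq :: "(complex \<Rightarrow> complex) \<Rightarrow> ennreal" where
  "H2_norm_sq f = (SUP x\<in>{0<..}. ennreal (1 / pi) *
      (\<integral>\<^sup>+ y. ennreal ((cmod (f (Complex x y)))\<^sup>2) \<partial>lborel))"

definition H2 :: "(complex \<Rightarrow> complex) set" where
  "H2 = {f. f holomorphic_on rhp \<and> H2_norm_sq f < \<infinity>}"

definition H2_norm :: "(complex \<Rightarrow> complex) \<Rightarrow> real" where
  "H2_norm f = sqrt (enn2real (H2_norm_sq f))"

definition comp_op :: "(complex \<Rightarrow> complex) \<Rightarrow> (complex \<Rightarrow> complex) \<Rightarrow> (complex \<Rightarrow> complex)" where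
  "comp_op \<phi> f = f \<circ> \<phi>"

end

theory Submission
  imports Defs "HOL-Complex_Analysis.Complex_Analysis"
begin

text \<open>
  The iterates of \<open>\<phi>\<close> are again affine, \<open>\<phi>\<^sup>n(w) = a\<^sup>n w + \<beta>\<^sub>n\<close>, with \<open>0 \<le> Re \<beta>\<^sub>n \<le> Re b / (1 - a)\<close>.
  Substituting \<open>y \<mapsto> a\<^sup>n y\<close> in the integral over a vertical line shows that \<open>\<parallel>f \<circ> \<phi>\<^sup>n\<parallel>\<^sup>2\<close>
  is \<open>a\<^sup>-\<^sup>n\<close> times the supremum of the line integrals of \<open>|f|\<^sup>2\<close> over the lines
  \<open>Re w = X\<close> with \<open>X > Re \<beta>\<^sub>n\<close>. By the identity theorem, a nonzero \<open>f\<close> has a positive line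
  integral on some line \<open>Re w = X\<close> to the right of all the \<open>Re \<beta>\<^sub>n\<close>, so \<open>\<parallel>C\<^sub>\<phi>\<^sup>n f\<parallel>\<^sup>2\<close> grows
  at least like a fixed multiple of \<open>a\<^sup>-\<^sup>n\<close>.
\<close>

definition line_norm_sq :: "(complex \<Rightarrow> complex) \<Rightarrow> real \<Rightarrow> ennreal" where
  "line_norm_sq f x = ennreal (1 / pi) * (\<integral>\<^sup>+ y. ennreal ((cmod (f (Complex x y)))\<^sup>2) \<partial>lborel)"

lemma H2_norm_sq_eq_SUP_line_norm_sq: "H2_norm_sq f = (SUP x\<in>{0<..}. line_norm_sq f x)"
  unfolding H2_norm_sq_def line_norm_sq_def ..

lemma line_norm_sq_le_H2_norm_sq: "x > 0 \<Longrightarrow> line_norm_sq f x \<le> H2_norm_sq f"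
  unfolding H2_norm_sq_eq_SUP_line_norm_sq by (rule SUP_upper) simp

lemma continuous_on_vertical_line:
  assumes "continuous_on rhp f" "x > 0"
  shows "continuous_on UNIV (\<lambda>y. f (Complex x y))"
proof -
  have "continuous_on UNIV (\<lambda>y::real. Complex x y)"
    unfolding Complex_eq by (intro continuous_intros)
  then show ?thesis
    by (rule continuous_on_compose2[OF assms(1)]) (use assms(2) in \<open>auto simp: rhp_def\<close>)
qed

lemma borel_measurable_vertical_line:
  assumes "continuous_on rhp f" "x > 0"
  shows "(\<lambda>y. ennreal ((cmod (f (Complex x y)))\<^sup>2)) \<in> borel_measurable borel"
proof -
  have "continuous_on UNIV (\<lambda>y. (cmod (f (Complex x y)))\<^sup>2)"
    using continuous_on_vertical_line[OF assms] by (intro continuous_intros)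
  then have "(\<lambda>y. (cmod (f (Complex x y)))\<^sup>2) \<in> borel_measurable borel"
    by (rule borel_measurable_continuous_onI)
  then show ?thesis by measurable
qed

lemma nn_integral_pos_if_continuous:
  fixes g :: "real \<Rightarrow> real"
  assumes "continuous_on UNIV g" "\<And>t. g t \<ge> 0" "g t\<^sub>0 > 0"
  shows "(\<integral>\<^sup>+ t. ennreal (g t) \<partial>lborel) > 0"
proof -
  have "isCont g t\<^sub>0" using assms(1) by (simp add: continuous_on_eq_continuous_at)
  then obtain d where d: "d > 0" "\<And>t. dist t t\<^sub>0 < d \<Longrightarrow> dist (g t) (g t\<^sub>0) < g t\<^sub>0 / 2"
    using assms(3) unfolding continuous_at_eps_delta by (metis half_gt_zero)
  define I where "I = {t\<^sub>0 - d/2..t\<^sub>0 + d/2}"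
  have "ennreal (g t\<^sub>0 / 2) * indicator I t \<le> ennreal (g t)" for t
  proof (cases "t \<in> I")
    case True
    then have "dist (g t) (g t\<^sub>0) < g t\<^sub>0 / 2"
      using d by (intro d(2)) (auto simp: I_def dist_real_def)
    then have "g t\<^sub>0 / 2 \<le> g t" by (auto simp: dist_real_def abs_if split: if_splits)
    then show ?thesis using True by (simp add: ennreal_leI)
  qed simp
  then have "(\<integral>\<^sup>+ t. ennreal (g t\<^sub>0 / 2) * indicator I t \<partial>lborel) \<le> (\<integral>\<^sup>+ t. ennreal (g t) \<partial>lborel)"
    by (intro nn_integral_mono)
  moreover have "(\<integral>\<^sup>+ t. ennreal (g t\<^sub>0 / 2) * indicator I t \<partial>lborel) = ennreal (g t\<^sub>0 / 2) * ennreal d"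
    using d(1) by (subst nn_integral_cmult_indicator) (auto simp: I_def)
  moreover have "ennreal (g t\<^sub>0 / 2) * ennreal d > 0"
    using d(1) assms(3) by (simp add: ennreal_mult'[symmetric])
  ultimately show ?thesis by (metis order_less_le_trans)
qed

lemma line_norm_sq_pos:
  assumes "continuous_on rhp f" "f z \<noteq> 0" "z \<in> rhp"
  shows "line_norm_sq f (Re z) > 0"
proof -
  have "(\<integral>\<^sup>+ y. ennreal ((cmod (f (Complex (Re z) y)))\<^sup>2) \<partial>lborel) > 0"
    by (rule nn_integral_pos_if_continuous[of _ "Im z"])
      (use continuous_on_vertical_line[OF assms(1)] assms(2,3)
        in \<open>auto simp: rhp_def intro!: continuous_intros\<close>)
  then show ?thesis by (simp add: line_norm_sq_def ennreal_zero_less_mult_iff)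
qed

lemma holomorphic_rhp_eq_0_if_eq_0_right:
  assumes "f holomorphic_on rhp" "c \<ge> 0" "\<And>z. Re z > c \<Longrightarrow> f z = 0" "z \<in> rhp"
  shows "f z = 0"
proof (rule analytic_continuation_open[where f = f and s = "{z. c < Re z}" and s' = rhp])
  show "{z. c < Re z} \<noteq> {}" by (auto intro!: exI[of _ "of_real (c + 1)"])
  show "connected rhp" unfolding rhp_def by (intro convex_connected convex_halfspace_Re_gt)
qed (use assms in \<open>auto simp: rhp_def open_halfspace_Re_gt\<close>)

lemma line_norm_sq_pos_right:
  assumes "f holomorphic_on rhp" "H2_norm_sq f \<noteq> 0" "c \<ge> 0"
  obtains X where "X > c" "line_norm_sq f X > 0"
proof -
  have "\<exists>z. Re z > c \<and> f z \<noteq> 0"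
  proof (rule ccontr)
    assume "\<not> ?thesis"
    then have "f z = 0" if "z \<in> rhp" for z
      using holomorphic_rhp_eq_0_if_eq_0_right[OF assms(1,3) _ that] by blast
    then have "H2_norm_sq f = 0"
      unfolding H2_norm_sq_def by (intro SUP_eq_const) (auto simp: rhp_def)
    with assms(2) show False ..
  qed
  then obtain z where "Re z > c" "f z \<noteq> 0" by blast
  moreover have "continuous_on rhp f" using assms(1) by (rule holomorphic_on_imp_continuous_on)
  ultimately show ?thesis
    using that line_norm_sq_pos[of f z] assms(3) by (auto simp: rhp_def)
qed

lemma line_norm_sq_comp_affine:
  assumes "continuous_on rhp f" "x > 0" "\<alpha> > 0" "Re \<beta> \<ge> 0"
  shows "line_norm_sq (f \<circ> (\<lambda>w. of_real \<alpha> * w + \<beta>)) x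
       = ennreal (1 / \<alpha>) * line_norm_sq f (\<alpha> * x + Re \<beta>)"
proof -
  define g where "g = (\<lambda>y. ennreal ((cmod (f (Complex (\<alpha> * x + Re \<beta>) y)))\<^sup>2))"
  have "\<alpha> * x + Re \<beta> > 0" using assms by (simp add: add_pos_nonneg)
  then have "g \<in> borel_measurable borel"
    unfolding g_def by (rule borel_measurable_vertical_line[OF assms(1)])
  then have "(\<integral>\<^sup>+ y. g y \<partial>lborel) = ennreal \<alpha> * (\<integral>\<^sup>+ y. g (Im \<beta> + \<alpha> * y) \<partial>lborel)"
    using assms(3) by (subst nn_integral_real_affine[where c = \<alpha> and t = "Im \<beta>"]) auto
  then have "(\<integral>\<^sup>+ y. g (Im \<beta> + \<alpha> * y) \<partial>lborel) = ennreal (1 / \<alpha>) * (\<integral>\<^sup>+ y. g y \<partial>lborel)"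
    using assms(3) by (simp add: mult.assoc[symmetric] ennreal_mult'[symmetric])
  moreover have "of_real \<alpha> * Complex x y + \<beta> = Complex (\<alpha> * x + Re \<beta>) (Im \<beta> + \<alpha> * y)" for y
    by (simp add: complex_eq_iff)
  ultimately show ?thesis
    by (simp add: line_norm_sq_def g_def ac_simps)
qed

lemma H2_norm_sq_comp_affine:
  assumes "continuous_on rhp f" "\<alpha> > 0" "Re \<beta> \<ge> 0"
  shows "H2_norm_sq (f \<circ> (\<lambda>w. of_real \<alpha> * w + \<beta>))
       = ennreal (1 / \<alpha>) * (SUP X\<in>{Re \<beta><..}. line_norm_sq f X)"
proof -
  have "(\<lambda>x. \<alpha> * x + Re \<beta>) ` {0<..} = {Re \<beta><..}"
  proof (intro equalityI subsetI)
    fix X assume "X \<in> {Re \<beta><..}"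
    then show "X \<in> (\<lambda>x. \<alpha> * x + Re \<beta>) ` {0<..}"
      using assms(2) by (intro image_eqI[of _ _ "(X - Re \<beta>) / \<alpha>"]) auto
  qed (use assms(2) in auto)
  have "H2_norm_sq (f \<circ> (\<lambda>w. of_real \<alpha> * w + \<beta>))
      = (SUP x\<in>{0<..}. ennreal (1 / \<alpha>) * line_norm_sq f (\<alpha> * x + Re \<beta>))"
    unfolding H2_norm_sq_eq_SUP_line_norm_sq
    by (intro SUP_cong refl) (simp add: line_norm_sq_comp_affine assms)
  also have "\<dots> = ennreal (1 / \<alpha>) * (SUP X\<in>(\<lambda>x. \<alpha> * x + Re \<beta>) ` {0<..}. line_norm_sq f X)"
    by (simp add: SUP_mult_left_ennreal image_image)
  finally show ?thesis
    by (simp only: \<open>(\<lambda>x. \<alpha> * x + Re \<beta>) ` {0<..} = {Re \<beta><..}\<close>)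
qed

lemma H2_norm_sq_comp_affine_le:
  assumes "continuous_on rhp f" "\<alpha> > 0" "Re \<beta> \<ge> 0"
  shows "H2_norm_sq (f \<circ> (\<lambda>w. of_real \<alpha> * w + \<beta>)) \<le> ennreal (1 / \<alpha>) * H2_norm_sq f"
  unfolding H2_norm_sq_comp_affine[OF assms]
  by (subst H2_norm_sq_eq_SUP_line_norm_sq) (use assms(3) in \<open>auto intro!: mult_left_mono SUP_subset_mono\<close>)

lemma H2_norm_sq_comp_affine_ge:
  assumes "continuous_on rhp f" "\<alpha> > 0" "Re \<beta> \<ge> 0" "X > Re \<beta>"
  shows "ennreal (1 / \<alpha>) * line_norm_sq f X \<le> H2_norm_sq (f \<circ> (\<lambda>w. of_real \<alpha> * w + \<beta>))"
  unfolding H2_norm_sq_comp_affine[OF assms(1-3)]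
  using assms(4) by (intro mult_left_mono SUP_upper) auto

lemma comp_op_funpow: "(comp_op \<phi> ^^ n) f = f \<circ> (\<phi> ^^ n)"
  by (induction n) (simp_all add: comp_op_def fun_eq_iff funpow_swap1)

lemma funpow_affine:
  fixes c b :: "'a :: comm_semiring_1"
  shows "(\<lambda>w. c * w + b) ^^ n = (\<lambda>w. c ^ n * w + b * (\<Sum>k<n. c ^ k))"
proof (induction n)
  case (Suc n)
  have "(\<lambda>w. c * w + b) ^^ Suc n = ((\<lambda>w. c * w + b) ^^ n) \<circ> (\<lambda>w. c * w + b)"
    by (rule funpow_Suc_right)
  with Suc.IH show ?case by (simp add: fun_eq_iff algebra_simps)
qed simp

lemma geometric_sum_le:
  fixes a :: real
  assumes "0 \<le> a" "a < 1"
  shows "(\<Sum>k<n. a ^ k) \<le> 1 / (1 - a)"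
proof -
  have "(\<Sum>k<n. a ^ k) = (1 - a ^ n) / (1 - a)" using assms by (simp add: sum_gp_strict)
  also have "\<dots> \<le> 1 / (1 - a)" using assms by (intro divide_right_mono) auto
  finally show ?thesis .
qed

lemma comp_op_affine_iterate:
  assumes "0 \<le> a" "a < 1" "Re b \<ge> 0"
  obtains \<beta> where "(comp_op (\<lambda>w. of_real a * w + b) ^^ n) f = f \<circ> (\<lambda>w. of_real (a ^ n) * w + \<beta>)"
    and "0 \<le> Re \<beta>" and "Re \<beta> \<le> Re b / (1 - a)"
proof
  define s where "s = (\<Sum>k<n. a ^ k)"
  show "(comp_op (\<lambda>w. of_real a * w + b) ^^ n) f = f \<circ> (\<lambda>w. of_real (a ^ n) * w + b * of_real s)"
    by (simp add: comp_op_funpow funpow_affine s_def)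
  have "0 \<le> s" "s \<le> 1 / (1 - a)"
    using assms(1,2) geometric_sum_le by (auto simp: s_def intro: sum_nonneg)
  then show "0 \<le> Re (b * of_real s)" "Re (b * of_real s) \<le> Re b / (1 - a)"
    using assms(3) mult_left_mono[of s "1 / (1 - a)" "Re b"] by auto
qed

lemma H2_norm_sq_eq_1:
  assumes "f \<in> H2" "H2_norm f = 1"
  shows "H2_norm_sq f = 1"
proof -
  have "H2_norm_sq f = ennreal (enn2real (H2_norm_sq f))"
    using assms(1) by (simp add: H2_def)
  also have "enn2real (H2_norm_sq f) = 1"
    using assms(2) by (simp add: H2_norm_def)
  finally show ?thesis by simp
qed

lemma H2_norm_comp_affine_ge:
  assumes "continuous_on rhp f" "H2_norm_sq f < \<infinity>" "\<alpha> > 0" "Re \<beta> \<ge> 0" "X > Re \<beta>"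
  shows "enn2real (line_norm_sq f X) / \<alpha> \<le> (H2_norm (f \<circ> (\<lambda>w. of_real \<alpha> * w + \<beta>)))\<^sup>2"
proof -
  have "H2_norm_sq (f \<circ> (\<lambda>w. of_real \<alpha> * w + \<beta>)) < \<infinity>"
    using H2_norm_sq_comp_affine_le[OF assms(1,3,4)] assms(2)
    by (simp add: ennreal_mult_less_top order.strict_trans1)
  then have "enn2real (ennreal (1 / \<alpha>) * line_norm_sq f X)
      \<le> enn2real (H2_norm_sq (f \<circ> (\<lambda>w. of_real \<alpha> * w + \<beta>)))"
    using H2_norm_sq_comp_affine_ge[OF assms(1,3-5)] by (intro enn2real_mono) auto
  then show ?thesis
    using assms(3) by (simp add: H2_norm_def enn2real_mult)
qed

theorem proposition3p1:
  fixes a :: real and b :: complex and \<phi> :: "complex \<Rightarrow> complex"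
  assumes "0 < a" and "a < 1" and "Re b \<ge> 0"
    and "\<phi> = (\<lambda>w. of_real a * w + b)"
  shows "\<forall>f\<in>H2. H2_norm f = 1 \<longrightarrow> (\<exists>n::nat. H2_norm ((comp_op \<phi> ^^ n) f) \<ge> 2)"
proof (intro ballI impI)
  fix f assume "f \<in> H2" and "H2_norm f = 1"
  then have norm_f: "H2_norm_sq f = 1" by (rule H2_norm_sq_eq_1)
  have "f holomorphic_on rhp" using \<open>f \<in> H2\<close> by (simp add: H2_def)
  then have "continuous_on rhp f" by (rule holomorphic_on_imp_continuous_on)
  have "H2_norm_sq f \<noteq> 0" and "Re b / (1 - a) \<ge> 0"
    using norm_f assms(2,3) by simp_all
  then obtain X where X: "X > Re b / (1 - a)" and "line_norm_sq f X > 0"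
    by (rule line_norm_sq_pos_right[OF \<open>f holomorphic_on rhp\<close>])
  moreover have "line_norm_sq f X < \<infinity>"
    using line_norm_sq_le_H2_norm_sq[of X f] norm_f X \<open>Re b / (1 - a) \<ge> 0\<close>
    by (simp add: le_less_trans[OF _ ennreal_one_less_top])
  ultimately have "0 < enn2real (line_norm_sq f X)" by (simp add: enn2real_positive_iff)
  define j where "j = enn2real (line_norm_sq f X)"
  obtain n where "4 / j < (1 / a) ^ n"
    using real_arch_pow[of "1 / a" "4 / j"] assms(1,2) by auto
  then have "2\<^sup>2 \<le> j / a ^ n"
    using \<open>0 < enn2real (line_norm_sq f X)\<close> assms(1) by (simp add: j_def field_simps power_divide)
  obtain \<beta> where iterate: "(comp_op \<phi> ^^ n) f = f \<circ> (\<lambda>w. of_real (a ^ n) * w + \<beta>)"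
    and \<beta>: "0 \<le> Re \<beta>" "Re \<beta> \<le> Re b / (1 - a)"
    using comp_op_affine_iterate[OF less_imp_le[OF assms(1)] assms(2,3)] unfolding assms(4) .
  have "j / a ^ n \<le> (H2_norm ((comp_op \<phi> ^^ n) f))\<^sup>2"
    unfolding iterate j_def using \<open>continuous_on rhp f\<close> norm_f assms(1) \<beta> X
    by (intro H2_norm_comp_affine_ge) auto
  with \<open>2\<^sup>2 \<le> j / a ^ n\<close> have "2\<^sup>2 \<le> (H2_norm ((comp_op \<phi> ^^ n) f))\<^sup>2"
    by (rule order.trans)
  then have "2 \<le> H2_norm ((comp_op \<phi> ^^ n) f)"
    by (rule power2_le_imp_le) (simp add: H2_norm_def)
  then show "\<exists>n. 2 \<le> H2_norm ((comp_op \<phi> ^^ n) f)" ..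
qed

end
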